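(* Let $H$ be a Hermitian operator with $\omega^{(\max)}(H)=\lambda_{\max}(H)-\lambda_{\min}(H)>0$, $A$ an operator on a finite-dimensional Hilbert space, and $\mathcal{U}_\theta(A)=e^{i\theta H}Ae^{-i\theta H}$ for $\theta\in\mathbb{R}$. Then: (1) for every $p\ge1$ and $\phi\in\mathbb{R}$, $\mathcal{U}^{(p)}_\phi(A):=\frac{d^p}{d\theta^p}\mathcal{U}_\theta(A)\big|_{\theta=\phi}=i^p\,\mathcal{U}_\phi\big([(H)^p,A]\big)$, where $[(H)^p,A]$ is the $p$-fold nested commutator $[H,[H,\dots,[H,A]]]$; (2) for every $p\ge2$ and $\phi\in\mathbb{R}$, $$\big\|\mathcal{U}^{(p)}_\phi(A)\big\|_\infty\le\big(2\omega^{(\max)}(H)\big)^p\frac{\|[H,[H,A]]\|_\infty}{4\omega^{(\max)}(H)^2}.$$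
   Context: $\|\cdot\|_\infty$ is the operator norm; $\lambda_{\max},\lambda_{\min}$ denote the largest and smallest eigenvalues. *)

theory Defs
  imports "HOL-Analysis.Analysis"
begin

type_synonym 'n cmat = "complex ^ 'n ^ 'n"

definition cscale :: "complex \<Rightarrow> 'n::finite cmat \<Rightarrow> 'n cmat" where
  "cscale c M = (\<chi> i j. c * M $ i $ j)"

definition adjoint_mat :: "'n::finite cmat \<Rightarrow> 'n cmat" where
  "adjoint_mat M = (\<chi> i j. cnj (M $ j $ i))"

definition hermitian :: "'n::finite cmat \<Rightarrow> bool" where
  "hermitian M \<longleftrightarrow> adjoint_mat M = M"

fun mpow :: "'n::finite cmat \<Rightarrow> nat \<Rightarrow> 'n cmat" where
  "mpow M 0 = mat 1"
| "mpow M (Suc k) = M ** mpow M k"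

definition mexp :: "'n::finite cmat \<Rightarrow> 'n cmat" where
  "mexp M = (\<Sum>k. (1 / fact k) *\<^sub>R mpow M k)"

definition commutator :: "'n::finite cmat \<Rightarrow> 'n cmat \<Rightarrow> 'n cmat" where
  "commutator X Y = X ** Y - Y ** X"

fun nested_comm :: "'n::finite cmat \<Rightarrow> nat \<Rightarrow> 'n cmat \<Rightarrow> 'n cmat" where
  "nested_comm H 0 A = A"
| "nested_comm H (Suc p) A = commutator H (nested_comm H p A)"

definition op_norm :: "'n::finite cmat \<Rightarrow> real" where
  "op_norm M = onorm (\<lambda>x. M *v x)"

definition eigenvalues :: "'n::finite cmat \<Rightarrow> complex set" where
  "eigenvalues M = {\<mu>. \<exists>v. v \<noteq> 0 \<and> M *v v = \<mu> *s v}"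

definition lambda_max :: "'n::finite cmat \<Rightarrow> real" where
  "lambda_max M = Max (Re ` eigenvalues M)"

definition lambda_min :: "'n::finite cmat \<Rightarrow> real" where
  "lambda_min M = Min (Re ` eigenvalues M)"

definition omega_max :: "'n::finite cmat \<Rightarrow> real" where
  "omega_max H = lambda_max H - lambda_min H"

definition conj_evol :: "'n::finite cmat \<Rightarrow> real \<Rightarrow> 'n cmat \<Rightarrow> 'n cmat" where
  "conj_evol H \<theta> A = mexp (cscale (\<i> * of_real \<theta>) H) ** A ** mexp (cscale (- \<i> * of_real \<theta>) H)"

definition nth_vderiv :: "nat \<Rightarrow> (real \<Rightarrow> 'a::real_normed_vector) \<Rightarrow> real \<Rightarrow> 'a" where
  "nth_vderiv p f = ((\<lambda>g x. vector_derivative g (at x)) ^^ p) f"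

end

theory Submission
  imports Defs
begin

text \<open>Part (1): transported into the Banach algebra of bounded operators on \<open>\<complex>\<^sup>n\<close>,
  \<open>\<U>\<^sub>\<theta>(X) = exp(\<theta>B) X exp(-\<theta>B)\<close> with \<open>B = iH\<close> has derivative \<open>exp(\<theta>B) (BX - XB) exp(-\<theta>B) = \<U>\<^sub>\<theta>(i[H,X])\<close>,
  and induction on \<open>p\<close> does the rest.
  Part (2): \<open>exp(\<theta>B)\<close> is an isometry, since \<open>\<langle>Bu,u\<rangle> = 0\<close> makes \<open>|exp(\<theta>B) x|\<^sup>2\<close> constant in \<open>\<theta>\<close>;
  so conjugation does not increase operator norms. A commutator with \<open>H\<close> equals the commutator
  with \<open>H - \<lambda>\<^sub>m\<^sub>i\<^sub>n I\<close>, which is hermitian with spectrum in \<open>[0, \<omega>]\<close> and hence has norm at most \<open>\<omega>\<close>,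
  the norm of a hermitian matrix being attained at an eigenvalue. So each commutator beyond
  the second costs at most a factor \<open>2\<omega>\<close>.\<close>

lemma cscale_diff: "cscale c (A - B) = cscale c A - cscale c B"
  by (simp add: vec_eq_iff cscale_def right_diff_distrib)

lemma cscale_cscale: "cscale a (cscale b A) = cscale (a * b) A"
  by (simp add: vec_eq_iff cscale_def mult.assoc)

lemma cscale_one: "cscale 1 A = A"
  by (simp add: vec_eq_iff cscale_def)

lemma matrix_mult_diff_left: "(A - B) ** C = A ** C - B ** (C::'a::ring_1^'n^'n)"
  by (simp add: vec_eq_iff matrix_matrix_mult_def sum_subtractf left_diff_distrib)

lemma matrix_mult_diff_right: "A ** (B - C) = A ** B - A ** (C::'a::ring_1^'n^'n)"
  by (simp add: vec_eq_iff matrix_matrix_mult_def sum_subtractf right_diff_distrib)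

lemma cscale_mult_left: "cscale c A ** B = cscale c (A ** B)"
  by (simp add: vec_eq_iff cscale_def matrix_matrix_mult_def sum_distrib_left mult.assoc)

lemma cscale_mult_right: "A ** cscale c B = cscale c (A ** B)"
  by (simp add: vec_eq_iff cscale_def matrix_matrix_mult_def sum_distrib_left mult_ac)

lemma cscale_matrix_vector_mult: "cscale c M *v v = c *s (M *v v)"
  by (simp add: vec_eq_iff cscale_def matrix_vector_mult_def sum_distrib_left mult.assoc)

lemma scaleR_eq_smult: "(r::real) *\<^sub>R (v::complex^'n) = complex_of_real r *s v"
  unfolding vec_eq_iff vector_scaleR_component vector_smult_component
  by (simp add: scaleR_conv_of_real)

lemma cscale_i_times_real: "cscale (\<i> * complex_of_real t) H = t *\<^sub>R cscale \<i> H"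
  unfolding vec_eq_iff vector_scaleR_component cscale_def vec_lambda_beta
  by (simp add: scaleR_conv_of_real mult_ac)

section \<open>Bounded operators as a Banach algebra\<close>

text \<open>Multiplication on \<open>'a^'n^'n\<close> is entrywise, so the matrix exponential is studied in the
  Banach algebra of bounded operators, where it is the library's \<open>exp\<close>.\<close>

typedef (overloaded) 'a endo = "UNIV :: ('a::euclidean_space \<Rightarrow>\<^sub>L 'a) set"
  morphisms blinfun_of_endo Endo by simp

setup_lifting type_definition_endo

instantiation endo :: (euclidean_space) real_normed_algebra_1
begin

lift_definition zero_endo :: "'a endo" is 0 .
lift_definition one_endo :: "'a endo" is id_blinfun .
lift_definition plus_endo :: "'a endo \<Rightarrow> 'a endo \<Rightarrow> 'a endo" is "(+)" .
lift_definition minus_endo :: "'a endo \<Rightarrow> 'a endo \<Rightarrow> 'a endo" is "(-)" .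
lift_definition uminus_endo :: "'a endo \<Rightarrow> 'a endo" is uminus .
lift_definition scaleR_endo :: "real \<Rightarrow> 'a endo \<Rightarrow> 'a endo" is scaleR .
lift_definition times_endo :: "'a endo \<Rightarrow> 'a endo \<Rightarrow> 'a endo" is blinfun_compose .
lift_definition norm_endo :: "'a endo \<Rightarrow> real" is norm .

definition dist_endo :: "'a endo \<Rightarrow> 'a endo \<Rightarrow> real" where
  "dist_endo a b = norm (a - b)"

definition sgn_endo :: "'a endo \<Rightarrow> 'a endo" where
  "sgn_endo x = inverse (norm x) *\<^sub>R x"

definition uniformity_endo :: "('a endo \<times> 'a endo) filter" where
  "uniformity_endo = (INF e\<in>{0 <..}. principal {(x, y). dist x y < e})"

definition open_endo :: "'a endo set \<Rightarrow> bool" where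
  "open_endo S = (\<forall>x\<in>S. \<forall>\<^sub>F (x', y) in uniformity. x' = x \<longrightarrow> y \<in> S)"

instance
proof
  fix a b c :: "'a endo" and r s :: real
  show "a + b + c = a + (b + c)" by transfer (simp add: algebra_simps)
  show "a + b = b + a" by transfer (simp add: algebra_simps)
  show "0 + a = a" by transfer simp
  show "- a + a = 0" by transfer simp
  show "a - b = a + - b" by transfer simp
  show "r *\<^sub>R (a + b) = r *\<^sub>R a + r *\<^sub>R b" by transfer (simp add: scaleR_add_right)
  show "(r + s) *\<^sub>R a = r *\<^sub>R a + s *\<^sub>R a" by transfer (simp add: scaleR_add_left)
  show "r *\<^sub>R s *\<^sub>R a = (r * s) *\<^sub>R a" by transfer simp
  show "1 *\<^sub>R a = a" by transfer simp
  show "a * b * c = a * (b * c)" by transfer (rule blinfun_eqI, simp)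
  show "(a + b) * c = a * c + b * c" by transfer (rule blinfun_eqI, simp add: blinfun.bilinear_simps)
  show "a * (b + c) = a * b + a * c" by transfer (rule blinfun_eqI, simp add: blinfun.bilinear_simps)
  show "r *\<^sub>R a * b = r *\<^sub>R (a * b)" by transfer (rule blinfun_eqI, simp add: blinfun.bilinear_simps)
  show "a * r *\<^sub>R b = r *\<^sub>R (a * b)" by transfer (rule blinfun_eqI, simp add: blinfun.bilinear_simps)
  show "1 * a = a" by transfer (rule blinfun_eqI, simp)
  show "a * 1 = a" by transfer (rule blinfun_eqI, simp)
  show "(0::'a endo) \<noteq> 1" by transfer (metis norm_blinfun_id norm_zero zero_neq_one)
  show "dist a b = norm (a - b)" by (simp add: dist_endo_def)
  show "sgn a = inverse (norm a) *\<^sub>R a" by (simp add: sgn_endo_def)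
  show "(uniformity :: ('a endo \<times> 'a endo) filter) = (INF e\<in>{0 <..}. principal {(x, y). dist x y < e})"
    by (simp add: uniformity_endo_def)
  show "norm a = 0 \<longleftrightarrow> a = 0" by transfer simp
  show "norm (a + b) \<le> norm a + norm b" by transfer (rule norm_triangle_ineq)
  show "norm (r *\<^sub>R a) = \<bar>r\<bar> * norm a" by transfer simp
  show "norm (a * b) \<le> norm a * norm b" by transfer (rule norm_blinfun_compose)
  show "norm (1::'a endo) = 1" by transfer (rule norm_blinfun_id)
next
  fix U :: "'a endo set"
  show "open U = (\<forall>x\<in>U. \<forall>\<^sub>F (x', y) in uniformity. x' = x \<longrightarrow> y \<in> U)"
    by (simp add: open_endo_def)
qed

end

lemma dist_blinfun_of_endo: "dist (blinfun_of_endo f) (blinfun_of_endo g) = dist f g"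
  unfolding dist_norm by transfer simp

instance endo :: (euclidean_space) banach
proof
  fix X :: "nat \<Rightarrow> 'a endo"
  assume "Cauchy X"
  then have "Cauchy (\<lambda>n. blinfun_of_endo (X n))"
    by (simp add: Cauchy_def dist_blinfun_of_endo)
  then obtain L where "(\<lambda>n. blinfun_of_endo (X n)) \<longlonglongrightarrow> L"
    using Cauchy_convergent_iff convergent_def by blast
  then have "X \<longlonglongrightarrow> Endo L"
    by (simp add: lim_sequentially Endo_inverse flip: dist_blinfun_of_endo)
  then show "convergent X" by (auto simp: convergent_def)
qed

lift_definition endo_apply :: "'a::euclidean_space endo \<Rightarrow> 'a \<Rightarrow> 'a" is blinfun_apply .

lemma endo_eqI: "(\<And>x. endo_apply f x = endo_apply g x) \<Longrightarrow> f = g"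
  by transfer (rule blinfun_eqI)

lemma endo_apply_one [simp]: "endo_apply 1 x = x"
  by transfer simp

lemma endo_apply_mult [simp]: "endo_apply (f * g) x = endo_apply f (endo_apply g x)"
  by transfer simp

lemma endo_apply_add [simp]: "endo_apply (f + g) x = endo_apply f x + endo_apply g x"
  by transfer (simp add: blinfun.bilinear_simps)

lemma endo_apply_diff [simp]: "endo_apply (f - g) x = endo_apply f x - endo_apply g x"
  by transfer (simp add: blinfun.bilinear_simps)

lemma endo_apply_scaleR [simp]: "endo_apply (r *\<^sub>R f) x = r *\<^sub>R endo_apply f x"
  by transfer (simp add: blinfun.scaleR_left)

lemma norm_endo_apply_le: "norm (endo_apply f x) \<le> norm f * norm x"
  by transfer (rule norm_blinfun)

lemma norm_endo_le: "0 \<le> b \<Longrightarrow> (\<And>x. norm (endo_apply f x) \<le> b * norm x) \<Longrightarrow> norm f \<le> b"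
  by transfer (rule norm_blinfun_bound)

lemma bounded_linear_endo_apply_left: "bounded_linear (\<lambda>f. endo_apply f x)"
  by (rule bounded_linear_intro[where K = "norm x"])
    (simp_all add: norm_endo_apply_le mult.commute[of "norm x"])

lemma exp_conj_has_vector_derivative:
  fixes B X :: "'a::{real_normed_algebra_1, banach}"
  shows "((\<lambda>t. exp (t *\<^sub>R B) * X * exp ((- t) *\<^sub>R B)) has_vector_derivative
          exp (t *\<^sub>R B) * (B * X - X * B) * exp ((- t) *\<^sub>R B)) (at t)"
proof -
  have "((\<lambda>t. exp (t *\<^sub>R (- B))) has_vector_derivative (- B) * exp (t *\<^sub>R (- B))) (at t)"
    by (rule exp_scaleR_has_vector_derivative_left)
  then have "((\<lambda>t. exp (t *\<^sub>R B) * X * exp (t *\<^sub>R (- B))) has_vector_derivative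
      exp (t *\<^sub>R B) * X * ((- B) * exp (t *\<^sub>R (- B))) + exp (t *\<^sub>R B) * B * X * exp (t *\<^sub>R (- B))) (at t)"
    by (intro has_vector_derivative_mult has_vector_derivative_mult_left
        exp_scaleR_has_vector_derivative_right)
  then show ?thesis
    by (simp add: algebra_simps)
qed

lemma norm_exp_skew_apply:
  fixes B :: "'a::euclidean_space endo"
  assumes skew: "\<And>x. endo_apply B x \<bullet> x = 0"
  shows "norm (endo_apply (exp (t *\<^sub>R B)) x) = norm x"
proof -
  define u where "u = (\<lambda>s. endo_apply (exp (s *\<^sub>R B)) x)"
  have du: "(u has_vector_derivative endo_apply B (u s)) (at s)" for s
    using bounded_linear.has_vector_derivative[OF bounded_linear_endo_apply_left[of x]
        exp_scaleR_has_vector_derivative_left[of B s]]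
    by (simp add: u_def)
  have "((\<lambda>s. u s \<bullet> u s) has_derivative (\<lambda>d. 0)) (at s)" for s
    using has_derivative_inner[OF du[of s, unfolded has_vector_derivative_def]
        du[of s, unfolded has_vector_derivative_def]] skew[of "u s"]
    by (simp add: inner_commute)
  then obtain c where "\<And>s. u s \<bullet> u s = c"
    using has_derivative_zero_constant[of UNIV "\<lambda>s. u s \<bullet> u s"] by auto
  then have "u t \<bullet> u t = u 0 \<bullet> u 0" by simp
  then show ?thesis
    by (simp add: u_def norm_eq_sqrt_inner)
qed

lemma norm_exp_skew_le:
  fixes B :: "'a::euclidean_space endo"
  assumes "\<And>x. endo_apply B x \<bullet> x = 0"
  shows "norm (exp (t *\<^sub>R B)) \<le> 1"
  by (rule norm_endo_le) (simp_all add: norm_exp_skew_apply[OF assms])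

lemma bounded_linear_matrix_vector_mult: "bounded_linear (\<lambda>x. (M::'n::finite cmat) *v x)"
  by (simp add: linear_conv_bounded_linear)

lemma norm_matrix_vector_mult_le: "norm (M *v x) \<le> op_norm M * norm x"
  unfolding op_norm_def by (rule onorm[OF bounded_linear_matrix_vector_mult])

lemma op_norm_nonneg: "0 \<le> op_norm M"
  unfolding op_norm_def by (rule onorm_pos_le[OF bounded_linear_matrix_vector_mult])

lemma matrix_vector_mult_scaleR_right: "(M::'n::finite cmat) *v (r *\<^sub>R x) = r *\<^sub>R (M *v x)"
  by (simp add: scaleR_eq_smult vector_scalar_commute)

lemma op_norm_cscale_le: "op_norm (cscale c M) \<le> cmod c * op_norm M"
  unfolding op_norm_def[of "cscale c M"]
proof (rule onorm_bound)
  fix x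
  have "norm (cscale c M *v x) = cmod c * norm (M *v x)"
    by (simp add: cscale_matrix_vector_mult norm_vec_def L2_set_right_distrib norm_mult)
  also have "\<dots> \<le> cmod c * (op_norm M * norm x)"
    by (intro mult_left_mono norm_matrix_vector_mult_le) simp
  finally show "norm (cscale c M *v x) \<le> cmod c * op_norm M * norm x"
    by (simp add: mult.assoc)
qed (simp add: op_norm_nonneg)

definition endo_of_mat :: "'n::finite cmat \<Rightarrow> (complex^'n) endo" where
  "endo_of_mat M = Endo (Blinfun (\<lambda>x. M *v x))"

definition mat_of_endo :: "(complex^'n::finite) endo \<Rightarrow> 'n cmat" where
  "mat_of_endo f = (\<chi> i j. endo_apply f (axis j 1) $ i)"

lemma endo_apply_endo_of_mat [simp]: "endo_apply (endo_of_mat M) x = M *v x"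
  by (simp add: endo_of_mat_def endo_apply.rep_eq Endo_inverse
      bounded_linear_Blinfun_apply[OF bounded_linear_matrix_vector_mult])

lemma matrix_vector_mult_axis: "(M *v axis j 1) $ i = M $ i $ (j::'n::finite)"
  by (simp add: matrix_vector_mult_def axis_def if_distrib cong: if_cong)

lemma mat_of_endo_of_mat [simp]: "mat_of_endo (endo_of_mat M) = M"
  by (simp add: mat_of_endo_def vec_eq_iff matrix_vector_mult_axis)

lemma norm_endo_of_mat: "norm (endo_of_mat M) = op_norm M"
  by (simp add: norm_endo.rep_eq norm_blinfun.rep_eq op_norm_def endo_of_mat_def Endo_inverse
      bounded_linear_Blinfun_apply[OF bounded_linear_matrix_vector_mult])

lemma endo_of_mat_mult: "endo_of_mat (M ** N) = endo_of_mat M * endo_of_mat N"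
  by (rule endo_eqI) (simp add: matrix_vector_mul_assoc)

lemma endo_of_mat_one: "endo_of_mat (mat 1) = 1"
  by (rule endo_eqI) simp

lemma endo_of_mat_add: "endo_of_mat (M + N) = endo_of_mat M + endo_of_mat N"
  by (rule endo_eqI) (simp add: matrix_vector_mult_add_rdistrib)

lemma endo_of_mat_diff: "endo_of_mat (M - N) = endo_of_mat M - endo_of_mat N"
  by (rule endo_eqI) (simp add: matrix_vector_mult_diff_rdistrib)

lemma endo_of_mat_scaleR: "endo_of_mat (r *\<^sub>R M) = r *\<^sub>R endo_of_mat M"
  by (rule endo_eqI) (simp add: vec_eq_iff matrix_vector_mult_def scaleR_sum_right)

lemma endo_of_mat_mpow: "endo_of_mat (mpow M k) = endo_of_mat M ^ k"
  by (induction k) (simp_all add: endo_of_mat_one endo_of_mat_mult)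

lemma bounded_linear_endo_of_mat: "bounded_linear endo_of_mat"
  by (simp add: linear_conv_bounded_linear[symmetric] linearI endo_of_mat_add endo_of_mat_scaleR)

lemma norm_vec_le_sum: "norm (x::'a::real_normed_vector^'n::finite) \<le> (\<Sum>i\<in>UNIV. norm (x$i))"
  unfolding norm_vec_def by (rule L2_set_le_sum) simp

lemma bounded_linear_mat_of_endo: "bounded_linear (mat_of_endo :: (complex^'n::finite) endo \<Rightarrow> _)"
proof (rule bounded_linear_intro)
  fix f g :: "(complex^'n) endo" and r :: real
  show "mat_of_endo (f + g) = mat_of_endo f + mat_of_endo g"
    by (simp add: mat_of_endo_def vec_eq_iff)
  show "mat_of_endo (r *\<^sub>R f) = r *\<^sub>R mat_of_endo f"
    by (simp add: mat_of_endo_def vec_eq_iff)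
  have entry: "norm (mat_of_endo f $ i $ j) \<le> norm f" for i j
    using Finite_Cartesian_Product.norm_nth_le[of "endo_apply f (axis j 1)" i] norm_endo_apply_le[of f "axis j (1::complex)"]
    by (simp add: mat_of_endo_def norm_axis_1)
  have "norm (mat_of_endo f) \<le> (\<Sum>i\<in>UNIV. \<Sum>j\<in>UNIV. norm (mat_of_endo f $ i $ j))"
    using norm_vec_le_sum[of "mat_of_endo f"] norm_vec_le_sum[of "mat_of_endo f $ _"]
    by (meson order_trans sum_mono)
  also have "\<dots> \<le> (\<Sum>i\<in>(UNIV::'n set). \<Sum>j\<in>(UNIV::'n set). norm f)"
    by (intro sum_mono entry)
  also have "\<dots> = norm f * (real CARD('n) * real CARD('n))"
    by (simp add: algebra_simps)
  finally show "norm (mat_of_endo f) \<le> norm f * (real CARD('n) * real CARD('n))" .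
qed

lemma endo_of_mat_mexp: "endo_of_mat (mexp M) = exp (endo_of_mat M)"
proof -
  interpret mat: bounded_linear mat_of_endo by (rule bounded_linear_mat_of_endo)
  interpret endo: bounded_linear endo_of_mat by (rule bounded_linear_endo_of_mat)
  have term_eq: "endo_of_mat ((1 / fact k) *\<^sub>R mpow M k) = endo_of_mat M ^ k /\<^sub>R fact k" for k
    by (simp add: endo_of_mat_scaleR endo_of_mat_mpow divide_inverse_commute)
  have exp_sums: "(\<lambda>k. endo_of_mat M ^ k /\<^sub>R fact k) sums exp (endo_of_mat M)"
    unfolding exp_def by (rule summable_sums[OF summable_exp_generic])
  then have "(\<lambda>k. mat_of_endo (endo_of_mat M ^ k /\<^sub>R fact k)) sums mat_of_endo (exp (endo_of_mat M))"
    by (rule mat.sums)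
  then have "(\<lambda>k. (1 / fact k) *\<^sub>R mpow M k) sums mat_of_endo (exp (endo_of_mat M))"
    by (simp flip: term_eq)
  then have "(\<lambda>k. endo_of_mat ((1 / fact k) *\<^sub>R mpow M k)) sums endo_of_mat (mexp M)"
    unfolding mexp_def by (intro endo.sums summable_sums sums_summable)
  then show ?thesis
    using exp_sums sums_unique2 by (simp add: term_eq)
qed

section \<open>Hermitian matrices\<close>

definition cinner :: "complex^'n::finite \<Rightarrow> complex^'n \<Rightarrow> complex" where
  "cinner v w = (\<Sum>i\<in>UNIV. v$i * cnj (w$i))"

lemma inner_eq_Re_cinner: "v \<bullet> w = Re (cinner v w)"
  by (simp add: cinner_def inner_vec_def inner_complex_def)

lemma cinner_smult_left [simp]: "cinner (c *s v) w = c * cinner v w"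
  by (simp add: cinner_def sum_distrib_left mult.assoc)

lemma cinner_smult_right [simp]: "cinner v (c *s w) = cnj c * cinner v w"
  by (simp add: cinner_def sum_distrib_left mult_ac)

lemma cnj_cinner: "cnj (cinner v w) = cinner w v"
  by (simp add: cinner_def mult.commute)

lemma cinner_self: "cinner v v = complex_of_real ((norm v)^2)"
proof -
  have "cinner v v = complex_of_real (\<Sum>i\<in>UNIV. (cmod (v$i))^2)"
    by (simp add: cinner_def complex_norm_square[symmetric])
  also have "(\<Sum>i\<in>UNIV. (cmod (v$i))^2) = (norm v)^2"
    by (simp add: norm_vec_def L2_set_def sum_nonneg)
  finally show ?thesis .
qed

lemma hermitian_entry: "hermitian H \<Longrightarrow> cnj (H$j$i) = H$i$j"
  unfolding hermitian_def adjoint_mat_def by (metis vec_lambda_beta)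

lemma hermitian_cinner:
  assumes "hermitian H"
  shows "cinner (H *v v) w = cinner v (H *v w)"
proof -
  have "cinner (H *v v) w = (\<Sum>i\<in>UNIV. \<Sum>j\<in>UNIV. H$i$j * v$j * cnj (w$i))"
    by (simp add: cinner_def matrix_vector_mult_def sum_distrib_right)
  also have "\<dots> = (\<Sum>j\<in>UNIV. \<Sum>i\<in>UNIV. v$j * cnj (H$j$i * w$i))"
    by (subst sum.swap) (simp add: hermitian_entry[OF assms] mult_ac)
  also have "\<dots> = cinner v (H *v w)"
    by (simp add: cinner_def matrix_vector_mult_def sum_distrib_left)
  finally show ?thesis .
qed

lemma hermitian_inner: "hermitian H \<Longrightarrow> (H *v v) \<bullet> w = v \<bullet> (H *v w)"
  by (simp add: inner_eq_Re_cinner hermitian_cinner)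

lemma hermitian_eigenvalue_real:
  assumes "hermitian H" "v \<noteq> 0" "H *v v = \<mu> *s v"
  shows "cnj \<mu> = \<mu>"
proof -
  have "\<mu> * cinner v v = cnj \<mu> * cinner v v"
    using hermitian_cinner[OF assms(1), of v v] assms(3) by simp
  moreover have "cinner v v \<noteq> 0"
    using assms(2) by (simp add: cinner_self)
  ultimately show ?thesis by simp
qed

lemma hermitian_eigenvectors_orthogonal:
  assumes "hermitian H" "H *v v = \<mu> *s v" "w \<noteq> 0" "H *v w = \<nu> *s w" "\<mu> \<noteq> \<nu>"
  shows "cinner v w = 0"
proof -
  have "\<mu> * cinner v w = cnj \<nu> * cinner v w"
    using hermitian_cinner[OF assms(1), of v w] assms(2,4) by simp
  then show ?thesis
    using hermitian_eigenvalue_real[OF assms(1,3,4)] assms(5) by simp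
qed

lemma finite_eigenvalues_hermitian:
  assumes "hermitian H"
  shows "finite (eigenvalues H)"
proof -
  define ev where "ev \<mu> = (SOME v. v \<noteq> 0 \<and> H *v v = \<mu> *s v)" for \<mu>
  have ev: "ev \<mu> \<noteq> 0 \<and> H *v ev \<mu> = \<mu> *s ev \<mu>" if "\<mu> \<in> eigenvalues H" for \<mu>
    using that unfolding eigenvalues_def ev_def by (rule CollectE) (rule someI_ex)
  have "inj_on ev (eigenvalues H)"
    by (rule inj_onI) (metis ev vector_mul_rcancel)
  moreover have "pairwise orthogonal (ev ` eigenvalues H)"
  proof (rule pairwise_imageI)
    fix \<mu> \<nu> assume "\<mu> \<in> eigenvalues H" "\<nu> \<in> eigenvalues H" "\<mu> \<noteq> \<nu>"
    then have "cinner (ev \<mu>) (ev \<nu>) = 0"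
      using ev by (blast intro: hermitian_eigenvectors_orthogonal[OF assms])
    then show "orthogonal (ev \<mu>) (ev \<nu>)"
      by (simp add: orthogonal_def inner_eq_Re_cinner)
  qed
  then have "finite (ev ` eigenvalues H)"
    by (rule pairwise_orthogonal_imp_finite)
  ultimately show ?thesis
    using finite_imageD by blast
qed

lemma op_norm_attained: "\<exists>x. norm x = 1 \<and> norm (M *v x) = op_norm (M::'n::finite cmat)"
proof -
  have "sphere (0::complex^'n) 1 \<noteq> {}"
    by simp
  moreover have "continuous_on (sphere 0 1) (\<lambda>v. norm (M *v v))"
    by (intro continuous_intros linear_continuous_on bounded_linear_matrix_vector_mult)
  ultimately obtain x where x: "norm x = 1"
    and x_max: "\<And>y. norm y = 1 \<Longrightarrow> norm (M *v y) \<le> norm (M *v x)"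
    using continuous_attains_sup[OF compact_sphere] by (metis mem_sphere_0)
  have "norm (M *v y) \<le> norm (M *v x) * norm y" for y
  proof (cases "y = 0")
    case False
    have "norm (M *v (y /\<^sub>R norm y)) \<le> norm (M *v x)"
      using False by (intro x_max) simp
    then show ?thesis
      using False
      by (simp add: matrix_vector_mult_scaleR_right divide_simps)
  qed simp
  then have "op_norm M \<le> norm (M *v x)"
    unfolding op_norm_def by (intro onorm_bound) simp_all
  moreover have "norm (M *v x) \<le> op_norm M"
    using norm_matrix_vector_mult_le[of M x] x by simp
  ultimately show ?thesis
    using x by (intro exI[of _ x]) simp
qed

lemma hermitian_square_eigenvector:
  assumes herm: "hermitian K" and x: "norm x = 1" "norm (K *v x) = op_norm K"
  shows "K *v (K *v x) = (op_norm K)\<^sup>2 *\<^sub>R x"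
proof -
  let ?s = "op_norm K" and ?a = "K *v (K *v x)" and ?b = "(op_norm K)\<^sup>2 *\<^sub>R x"
  have "norm ?a \<le> ?s\<^sup>2"
    using norm_matrix_vector_mult_le[of K "K *v x"] x by (simp add: power2_eq_square)
  then have "(norm ?a)\<^sup>2 \<le> (?s\<^sup>2)\<^sup>2"
    by (intro power_mono) simp_all
  moreover have "?a \<bullet> ?b = (?s\<^sup>2)\<^sup>2"
    using hermitian_inner[OF herm, of "K *v x" x] x
    by (simp add: power2_norm_eq_inner[symmetric] power2_eq_square)
  moreover have "?b \<bullet> ?b = (?s\<^sup>2)\<^sup>2"
    using x by (simp add: power2_norm_eq_inner[symmetric] power2_eq_square)
  ultimately have "(norm (?a - ?b))\<^sup>2 \<le> 0"
    unfolding power2_norm_eq_inner inner_diff by (simp only: inner_commute[of ?b ?a])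
  then show ?thesis by simp
qed

text \<open>The operator norm of a hermitian matrix is attained at an eigenvalue: if \<open>x\<close> attains it,
  then \<open>K\<^sup>2 x = s\<^sup>2 x\<close>, so either \<open>Kx + sx\<close> is an eigenvector for \<open>s\<close> or it vanishes and
  \<open>x\<close> is an eigenvector for \<open>-s\<close>.\<close>

lemma hermitian_op_norm_eigenvalue:
  assumes herm: "hermitian K"
  shows "complex_of_real (op_norm K) \<in> eigenvalues K \<or> complex_of_real (- op_norm K) \<in> eigenvalues K"
proof -
  let ?s = "op_norm K"
  obtain x where x: "norm x = 1" "norm (K *v x) = ?s"
    using op_norm_attained by blast
  define y where "y = K *v x + ?s *\<^sub>R x"
  show ?thesis
  proof (cases "y = 0")
    case True
    then have "K *v x = complex_of_real (- ?s) *s x"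
      by (simp add: y_def scaleR_eq_smult[symmetric] eq_neg_iff_add_eq_0)
    moreover have "x \<noteq> 0" using x by auto
    ultimately show ?thesis
      unfolding eigenvalues_def by blast
  next
    case False
    have "K *v y = ?s *\<^sub>R y"
      using hermitian_square_eigenvector[OF herm x]
      by (simp add: y_def matrix_vector_right_distrib matrix_vector_mult_scaleR_right
          scaleR_add_right power2_eq_square add.commute)
    then show ?thesis
      using False unfolding eigenvalues_def scaleR_eq_smult by blast
  qed
qed

lemma hermitian_op_norm_le:
  assumes herm: "hermitian K"
    and spectrum: "\<And>\<mu>. \<mu> \<in> eigenvalues K \<Longrightarrow> 0 \<le> Re \<mu> \<and> Re \<mu> \<le> b"
  shows "op_norm K \<le> b"
  using hermitian_op_norm_eigenvalue[OF herm] spectrum[of "complex_of_real (op_norm K)"]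
    spectrum[of "complex_of_real (- op_norm K)"] op_norm_nonneg[of K]
  by auto

lemma hermitian_shift:
  assumes "hermitian H"
  shows "hermitian (H - cscale (complex_of_real r) (mat 1))"
  using hermitian_entry[OF assms]
  by (simp add: hermitian_def adjoint_mat_def vec_eq_iff cscale_def mat_def)

lemma eigenvalues_shift:
  "\<mu> \<in> eigenvalues (M - cscale c (mat 1)) \<longleftrightarrow> \<mu> + c \<in> eigenvalues M"
  by (simp add: eigenvalues_def matrix_vector_mult_diff_rdistrib cscale_matrix_vector_mult
      vector_sadd_rdistrib diff_eq_eq)

lemma op_norm_shift_lambda_min_le:
  assumes herm: "hermitian H"
  shows "op_norm (H - cscale (complex_of_real (lambda_min H)) (mat 1)) \<le> omega_max H"
proof (rule hermitian_op_norm_le[OF hermitian_shift[OF herm]])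
  fix \<mu> assume "\<mu> \<in> eigenvalues (H - cscale (complex_of_real (lambda_min H)) (mat 1))"
  then have "\<mu> + complex_of_real (lambda_min H) \<in> eigenvalues H"
    by (simp only: eigenvalues_shift)
  then have ev: "Re \<mu> + lambda_min H \<in> Re ` eigenvalues H"
    using imageI[of _ _ Re] by fastforce
  have fin: "finite (Re ` eigenvalues H)"
    using finite_eigenvalues_hermitian[OF herm] by simp
  show "0 \<le> Re \<mu> \<and> Re \<mu> \<le> omega_max H"
    using Min_le[OF fin ev] Max_ge[OF fin ev]
    by (simp add: omega_max_def lambda_max_def lambda_min_def)
qed

lemma omega_max_nonneg: "hermitian H \<Longrightarrow> 0 \<le> omega_max H"
  using op_norm_shift_lambda_min_le op_norm_nonneg order_trans by blast

section \<open>Nested commutators\<close>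

lemma commutator_shift: "commutator (H - cscale c (mat 1)) X = commutator H X"
  by (simp add: commutator_def matrix_mult_diff_left matrix_mult_diff_right
      cscale_mult_left cscale_mult_right)

lemma op_norm_commutator_le: "op_norm (commutator K X) \<le> 2 * op_norm K * op_norm X"
proof -
  let ?K = "endo_of_mat K" and ?X = "endo_of_mat X"
  have "op_norm (commutator K X) = norm (?K * ?X - ?X * ?K)"
    unfolding commutator_def norm_endo_of_mat[symmetric] endo_of_mat_diff endo_of_mat_mult ..
  also have "\<dots> \<le> norm ?K * norm ?X + norm ?X * norm ?K"
    by (intro norm_triangle_le_diff add_mono norm_mult_ineq)
  finally show ?thesis by (simp add: norm_endo_of_mat)
qed

lemma op_norm_commutator_hermitian_le:
  assumes herm: "hermitian H"
  shows "op_norm (commutator H X) \<le> 2 * omega_max H * op_norm X"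
proof -
  let ?K = "H - cscale (complex_of_real (lambda_min H)) (mat 1)"
  have "op_norm (commutator H X) \<le> 2 * op_norm ?K * op_norm X"
    using op_norm_commutator_le[of ?K X] by (simp only: commutator_shift)
  also have "\<dots> \<le> 2 * omega_max H * op_norm X"
    using op_norm_shift_lambda_min_le[OF herm] op_norm_nonneg[of X]
    by (intro mult_right_mono) simp_all
  finally show ?thesis .
qed

lemma op_norm_nested_comm_le:
  assumes herm: "hermitian H"
  shows "op_norm (nested_comm H q X) \<le> (2 * omega_max H) ^ q * op_norm X"
proof (induction q)
  case (Suc q)
  have "op_norm (nested_comm H (Suc q) X) \<le> 2 * omega_max H * op_norm (nested_comm H q X)"
    by (simp add: op_norm_commutator_hermitian_le[OF herm])
  also have "\<dots> \<le> 2 * omega_max H * ((2 * omega_max H) ^ q * op_norm X)"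
    using Suc omega_max_nonneg[OF herm] by (intro mult_left_mono) simp_all
  finally show ?case by (simp add: mult_ac)
qed simp

lemma nested_comm_add: "nested_comm H (q + p) A = nested_comm H q (nested_comm H p A)"
  by (induction q) simp_all

section \<open>Conjugation by \<open>exp(i\<theta>H)\<close>\<close>

lemma hermitian_times_i_skew:
  assumes herm: "hermitian H"
  shows "(cscale \<i> H *v x) \<bullet> x = 0"
proof -
  have "cnj (cinner (H *v x) x) = cinner (H *v x) x"
    by (simp add: cnj_cinner hermitian_cinner[OF herm])
  then have "Im (cinner (H *v x) x) = 0"
    by (metis Reals_cnj_iff complex_is_Real_iff)
  then show ?thesis
    by (simp add: inner_eq_Re_cinner cscale_matrix_vector_mult)
qed

lemma endo_of_mat_conj_evol:
  "endo_of_mat (conj_evol H t X) =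
     exp (t *\<^sub>R endo_of_mat (cscale \<i> H)) * endo_of_mat X * exp ((- t) *\<^sub>R endo_of_mat (cscale \<i> H))"
proof -
  have "cscale (- \<i> * complex_of_real t) H = (- t) *\<^sub>R cscale \<i> H"
    using cscale_i_times_real[of "- t" H] by simp
  then show ?thesis
    by (simp only: conj_evol_def endo_of_mat_mult endo_of_mat_mexp cscale_i_times_real endo_of_mat_scaleR)
qed

lemma conj_evol_cscale: "conj_evol H t (cscale c X) = cscale c (conj_evol H t X)"
  by (simp add: conj_evol_def cscale_mult_left cscale_mult_right)

lemma commutator_cscale: "commutator H (cscale c X) = cscale c (commutator H X)"
  by (simp add: commutator_def cscale_mult_left cscale_mult_right cscale_diff)

lemma conj_evol_has_vector_derivative:
  "((\<lambda>t. conj_evol H t X) has_vector_derivative conj_evol H t (cscale \<i> (commutator H X))) (at t)"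
proof -
  have "cscale \<i> (commutator H X) = cscale \<i> H ** X - X ** cscale \<i> H"
    by (simp add: commutator_def cscale_diff cscale_mult_left cscale_mult_right)
  then have comm: "endo_of_mat (cscale \<i> (commutator H X))
      = endo_of_mat (cscale \<i> H) * endo_of_mat X - endo_of_mat X * endo_of_mat (cscale \<i> H)"
    by (simp add: endo_of_mat_diff endo_of_mat_mult)
  have "((\<lambda>t. endo_of_mat (conj_evol H t X)) has_vector_derivative
      endo_of_mat (conj_evol H t (cscale \<i> (commutator H X)))) (at t)"
    unfolding endo_of_mat_conj_evol comm
    by (rule exp_conj_has_vector_derivative)
  from bounded_linear.has_vector_derivative[OF bounded_linear_mat_of_endo this]
  show ?thesis by simp
qed

lemma nth_vderiv_conj_evol:
  "nth_vderiv p (\<lambda>t. conj_evol H t A) = (\<lambda>t. conj_evol H t (cscale (\<i> ^ p) (nested_comm H p A)))"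
proof (induction p)
  case 0
  show ?case by (simp add: nth_vderiv_def cscale_one)
next
  case (Suc p)
  have "nth_vderiv (Suc p) (\<lambda>t. conj_evol H t A)
      = (\<lambda>t. vector_derivative (nth_vderiv p (\<lambda>t. conj_evol H t A)) (at t))"
    by (simp add: nth_vderiv_def)
  also have "\<dots> = (\<lambda>t. conj_evol H t (cscale \<i> (commutator H (cscale (\<i> ^ p) (nested_comm H p A)))))"
    unfolding Suc by (simp add: vector_derivative_at[OF conj_evol_has_vector_derivative])
  finally show ?case
    by (simp add: commutator_cscale cscale_cscale)
qed

lemma op_norm_conj_evol_le:
  assumes herm: "hermitian H"
  shows "op_norm (conj_evol H t X) \<le> op_norm X"
proof -
  let ?B = "endo_of_mat (cscale \<i> H)"
  have skew: "endo_apply ?B x \<bullet> x = 0" for x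
    by (simp add: hermitian_times_i_skew[OF herm])
  have "op_norm (conj_evol H t X) \<le> norm (exp (t *\<^sub>R ?B)) * op_norm X * norm (exp ((- t) *\<^sub>R ?B))"
    unfolding norm_endo_of_mat[symmetric] endo_of_mat_conj_evol
    by (rule order_trans[OF norm_mult_ineq mult_right_mono[OF norm_mult_ineq norm_ge_zero]])
  also have "\<dots> \<le> 1 * op_norm X * 1"
    by (intro mult_mono norm_exp_skew_le[OF skew] op_norm_nonneg) (simp_all add: op_norm_nonneg)
  finally show ?thesis by simp
qed

lemma op_norm_nth_vderiv_conj_evol_le:
  assumes herm: "hermitian H"
  shows "op_norm (nth_vderiv (q + 2) (\<lambda>t. conj_evol H t A) t)
    \<le> (2 * omega_max H) ^ q * op_norm (nested_comm H 2 A)"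
proof -
  have "op_norm (nth_vderiv (q + 2) (\<lambda>t. conj_evol H t A) t)
      \<le> op_norm (conj_evol H t (nested_comm H (q + 2) A))"
    using op_norm_cscale_le[of "\<i> ^ (q + 2)"]
    by (simp add: nth_vderiv_conj_evol conj_evol_cscale norm_power)
  also have "\<dots> \<le> op_norm (nested_comm H q (nested_comm H 2 A))"
    unfolding nested_comm_add by (rule op_norm_conj_evol_le[OF herm])
  also have "\<dots> \<le> (2 * omega_max H) ^ q * op_norm (nested_comm H 2 A)"
    by (rule op_norm_nested_comm_le[OF herm])
  finally show ?thesis .
qed

theorem lemma5:
  fixes H A :: "complex ^ 'n ^ 'n"
  assumes herm: "hermitian H"
    and gap: "omega_max H > 0"
  shows "(\<forall>p\<ge>1. \<forall>\<phi>::real.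
            (\<forall>k<p. nth_vderiv k (\<lambda>\<theta>. conj_evol H \<theta> A) differentiable (at \<phi>)) \<and>
            nth_vderiv p (\<lambda>\<theta>. conj_evol H \<theta> A) \<phi>
              = cscale (\<i> ^ p) (conj_evol H \<phi> (nested_comm H p A)))
       \<and> (\<forall>p\<ge>2. \<forall>\<phi>::real.
            op_norm (nth_vderiv p (\<lambda>\<theta>. conj_evol H \<theta> A) \<phi>)
              \<le> (2 * omega_max H) ^ p * op_norm (nested_comm H 2 A) / (4 * (omega_max H)\<^sup>2))"
proof -
  have derivative: "nth_vderiv p (\<lambda>\<theta>. conj_evol H \<theta> A) \<phi>
      = cscale (\<i> ^ p) (conj_evol H \<phi> (nested_comm H p A))" for p \<phi>
    by (simp add: nth_vderiv_conj_evol conj_evol_cscale)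
  have bound: "op_norm (nth_vderiv (q + 2) (\<lambda>\<theta>. conj_evol H \<theta> A) \<phi>)
      \<le> (2 * omega_max H) ^ (q + 2) * op_norm (nested_comm H 2 A) / (4 * (omega_max H)\<^sup>2)" for q \<phi>
    using op_norm_nth_vderiv_conj_evol_le[OF herm, of q A \<phi>] gap
    by (simp add: power_add power2_eq_square)
  have "nth_vderiv k (\<lambda>\<theta>. conj_evol H \<theta> A) differentiable (at \<phi>)" for k \<phi>
    unfolding nth_vderiv_conj_evol by (rule differentiableI_vector[OF conj_evol_has_vector_derivative])
  moreover have "op_norm (nth_vderiv p (\<lambda>\<theta>. conj_evol H \<theta> A) \<phi>)
      \<le> (2 * omega_max H) ^ p * op_norm (nested_comm H 2 A) / (4 * (omega_max H)\<^sup>2)"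
    if "2 \<le> p" for p \<phi>
    using bound[of "p - 2" \<phi>] that by (simp only: le_add_diff_inverse2)
  ultimately show ?thesis
    using derivative by blast
qed

end
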